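(* Let $d,t$ be positive integers with $2t\le d$, and let $G'$ be a spanning subgraph of an $n$-vertex graph $G$ such that the pair $(G',G)$ is $(d,t)$-useful, $\delta(G')\ge d$, and $e\,(2\Delta(G')^2+1)\le \exp(t^2/(2d))$. Then $\mathrm{sh}(G)=\lceil\log_2 n\rceil$.
   Context: A family of subsets $V_1,\dots,V_k$ of a set $V$ is a separating system of $V$ if for every two distinct $u,v\in V$ there is $i$ with $|V_i\cap\{u,v\}|=1$. For a graph $G$, $\mathrm{sh}(G)$ is the minimum size of a separating system of $V(G)$ consisting of sets $S$ such that the induced subgraph $G[S]$ contains a Hamilton cycle. For positive integers $d,t$ with $2t\le d$ and $n$-vertex graphs $G'\subseteq G$ on the same vertex set, the pair $(G',G)$ is $(d,t)$-useful if for every $S\subseteq V(G)$ with $|S|=\lceil n/2\rceil$ and $\delta(G'[S])\ge d/2-t$, the induced subgraph $G[S]$ is Hamiltonian. $\delta,\Delta$ denote minimum and maximum degree; $e$ is Euler's number. *)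

theory Defs
  imports Complex_Main
begin

definition graph :: "'a set \<Rightarrow> ('a \<Rightarrow> 'a \<Rightarrow> bool) \<Rightarrow> bool" where
  "graph V E \<longleftrightarrow> finite V \<and> (\<forall>u v. E u v \<longrightarrow> u \<in> V \<and> v \<in> V)
     \<and> (\<forall>u v. E u v \<longrightarrow> E v u) \<and> (\<forall>v. \<not> E v v)"

definition deg_in :: "('a \<Rightarrow> 'a \<Rightarrow> bool) \<Rightarrow> 'a set \<Rightarrow> 'a \<Rightarrow> nat" where
  "deg_in E S v = card {u \<in> S. E v u}"

definition max_degree :: "'a set \<Rightarrow> ('a \<Rightarrow> 'a \<Rightarrow> bool) \<Rightarrow> nat" where
  "max_degree V E = Max (deg_in E V ` V)"

definition min_degree :: "'a set \<Rightarrow> ('a \<Rightarrow> 'a \<Rightarrow> bool) \<Rightarrow> nat" where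
  "min_degree V E = Min (deg_in E V ` V)"

text \<open>The induced subgraph E[S] contains a Hamilton cycle (a cycle, hence at least 3 vertices,
  through all vertices of S).\<close>
definition hamiltonian_on :: "('a \<Rightarrow> 'a \<Rightarrow> bool) \<Rightarrow> 'a set \<Rightarrow> bool" where
  "hamiltonian_on E S \<longleftrightarrow> (\<exists>xs. distinct xs \<and> set xs = S \<and> length xs \<ge> 3 \<and>
      (\<forall>i < length xs. E (xs ! i) (xs ! ((i + 1) mod length xs))))"

definition separating :: "'a set \<Rightarrow> 'a set set \<Rightarrow> bool" where
  "separating V F \<longleftrightarrow> (\<forall>u\<in>V. \<forall>v\<in>V. u \<noteq> v \<longrightarrow> (\<exists>S\<in>F. card (S \<inter> {u, v}) = 1))"

definition sh :: "'a set \<Rightarrow> ('a \<Rightarrow> 'a \<Rightarrow> bool) \<Rightarrow> nat" where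
  "sh V E = (INF F \<in> {F. finite F \<and> (\<forall>S\<in>F. S \<subseteq> V \<and> hamiltonian_on E S) \<and> separating V F}. card F)"

definition useful :: "nat \<Rightarrow> nat \<Rightarrow> 'a set \<Rightarrow> ('a \<Rightarrow> 'a \<Rightarrow> bool) \<Rightarrow> ('a \<Rightarrow> 'a \<Rightarrow> bool) \<Rightarrow> bool" where
  "useful d t V E' E \<longleftrightarrow> (\<forall>S. S \<subseteq> V \<and> card S = nat \<lceil>real (card V) / 2\<rceil>
      \<and> (\<forall>v\<in>S. real (deg_in E' S v) \<ge> real d / 2 - real t) \<longrightarrow> hamiltonian_on E S)"

end

theory Submission
  imports Defs "HOL-Probability.Hoeffding"
begin

text \<open>
  Any separating family \<open>F\<close> gives an injection \<open>v \<mapsto> {S \<in> F. v \<in> S}\<close> of \<open>V\<close> into \<open>Pow F\<close>,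
  so \<open>card F \<ge> \<lceil>log 2 n\<rceil>\<close>. Conversely, we build \<open>\<lceil>log 2 n\<rceil>\<close> Hamiltonian sets of size
  \<open>\<lceil>n / 2\<rceil>\<close> one at a time, each halving every class of vertices not yet separated: pair up the
  vertices inside each class (leaving at most one unmatched vertex per class) and pick one vertex
  of every pair at random. A vertex keeps at least \<open>d / 2 - t\<close> of its \<open>G'\<close>-neighbours in the
  chosen half unless a binomial count falls well below its mean, which by a Chernoff bound has
  probability at most \<open>exp (- t\<^sup>2 / (2 d))\<close>; each such bad event depends on at most
  \<open>2 \<Delta>\<^sup>2\<close> others, so the symmetric local lemma gives a choice avoiding all of them, and
  usefulness makes the chosen half Hamiltonian in \<open>G\<close>.
\<close>

section \<open>A Chernoff bound\<close>

lemma sum_power_card_Pow: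
  fixes r :: "'a::comm_semiring_1"
  assumes "finite K"
  shows "(\<Sum>T\<in>Pow K. r ^ card T) = (r + 1) ^ card K"
  using prod_add[OF assms, of "\<lambda>_. r" "\<lambda>_. 1"] by simp

lemma one_plus_exp_minus_le:
  fixes l :: real
  assumes "l \<ge> 0"
  shows "1 + exp (- l) \<le> 2 * exp (l\<^sup>2 / 8 - l / 2)"
proof -
  have "ln ((1 + exp l) / 2) \<le> l / 2 + l\<^sup>2 / 8"
    using Hoeffdings_lemma_aux[of l "1/2"] assms by (simp add: field_simps)
  then have "(1 + exp l) / 2 \<le> exp (l / 2 + l\<^sup>2 / 8)"
    by (metis exp_le_cancel_iff exp_ln add_pos_pos exp_gt_zero half_gt_zero zero_less_one)
  then have "exp (- l) * (1 + exp l) \<le> exp (- l) * (2 * exp (l / 2 + l\<^sup>2 / 8))"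
    by (intro mult_left_mono) auto
  then show ?thesis
    by (simp add: algebra_simps flip: exp_add)
qed

text \<open>Chernoff bound for a uniformly random subset, by the exponential moment method with
  weight \<open>exp (l * (c - card T))\<close>, where \<open>c = card K / 2 - s\<close> and \<open>l = 4 s / card K\<close>.\<close>
lemma card_small_subsets_le:
  assumes "finite K" "K \<noteq> {}" "s \<ge> 0"
  shows "real (card {T \<in> Pow K. real (card T) < real (card K) / 2 - s})
           \<le> 2 ^ card K * exp (- 2 * s\<^sup>2 / real (card K))"
proof -
  define m where "m = real (card K)"
  have m: "m > 0" using assms by (simp add: m_def card_gt_0_iff)
  define l where "l = 4 * s / m"
  define c where "c = m / 2 - s"
  have l: "l \<ge> 0" using m assms by (simp add: l_def)
  have "real (card {T \<in> Pow K. real (card T) < c}) = (\<Sum>T\<in>{T \<in> Pow K. real (card T) < c}. 1)"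
    by simp
  also have "\<dots> \<le> (\<Sum>T\<in>{T \<in> Pow K. real (card T) < c}. exp (l * (c - card T)))"
    using l by (intro sum_mono) auto
  also have "\<dots> \<le> (\<Sum>T\<in>Pow K. exp (l * (c - card T)))"
    using assms by (intro sum_mono2) auto
  also have "\<dots> = (\<Sum>T\<in>Pow K. exp (l * c) * exp (- l) ^ card T)"
    by (intro sum.cong refl) (simp add: algebra_simps flip: exp_add exp_of_nat_mult)
  also have "\<dots> = exp (l * c) * (exp (- l) + 1) ^ card K"
    by (simp add: sum_distrib_left[symmetric] sum_power_card_Pow assms)
  also have "\<dots> \<le> exp (l * c) * (2 * exp (l\<^sup>2 / 8 - l / 2)) ^ card K"
    using one_plus_exp_minus_le[OF l] by (intro mult_left_mono power_mono) (auto simp: add.commute)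
  also have "\<dots> = 2 ^ card K * exp (l * c + m * (l\<^sup>2 / 8 - l / 2))"
    by (simp add: m_def power_mult_distrib exp_add flip: exp_of_nat_mult)
  also have "l * c + m * (l\<^sup>2 / 8 - l / 2) = - 2 * s\<^sup>2 / m"
    using m by (simp add: l_def c_def field_simps power2_eq_square)
  finally show ?thesis by (simp add: c_def m_def)
qed

section \<open>The local lemma in counting form\<close>

lemma card_Int_le_by_fibres:
  fixes f :: "'b \<Rightarrow> 'c" and p :: real
  assumes "finite \<Omega>" "B \<subseteq> \<Omega>"
    and closed: "\<And>\<omega> \<omega>'. \<omega> \<in> B \<Longrightarrow> \<omega>' \<in> \<Omega> \<Longrightarrow> f \<omega>' = f \<omega> \<Longrightarrow> \<omega>' \<in> B"
    and fibre: "\<And>\<omega>. \<omega> \<in> \<Omega> \<Longrightarrow>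
      real (card {\<omega>' \<in> \<Omega>. f \<omega>' = f \<omega> \<and> \<omega>' \<in> A}) \<le> p * real (card {\<omega>' \<in> \<Omega>. f \<omega>' = f \<omega>})"
  shows "real (card (A \<inter> B)) \<le> p * real (card B)"
proof -
  have fin: "finite B" using assms(1,2) finite_subset by blast
  have fibre_B: "{\<omega>' \<in> \<Omega>. f \<omega>' = f \<omega> \<and> P \<omega>'} = {\<omega>' \<in> B. f \<omega>' = f \<omega> \<and> P \<omega>'}"
    if "\<omega> \<in> B" for \<omega> P
    using that assms(2) closed by blast
  have "real (card (A \<inter> B)) = (\<Sum>\<omega>\<in>A \<inter> B. 1)"
    by simp
  also have "\<dots> = (\<Sum>\<kappa>\<in>f ` B. \<Sum>\<omega>\<in>{\<omega> \<in> A \<inter> B. f \<omega> = \<kappa>}. 1)"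
    by (rule sum.group[symmetric]) (use fin in auto)
  also have "\<dots> = (\<Sum>\<kappa>\<in>f ` B. real (card {\<omega> \<in> A \<inter> B. f \<omega> = \<kappa>}))"
    by simp
  also have "\<dots> \<le> (\<Sum>\<kappa>\<in>f ` B. p * real (card {\<omega> \<in> B. f \<omega> = \<kappa>}))"
  proof (rule sum_mono)
    fix \<kappa> assume "\<kappa> \<in> f ` B"
    then obtain \<omega> where \<omega>: "\<omega> \<in> B" "\<kappa> = f \<omega>" by blast
    have "{\<omega>' \<in> A \<inter> B. f \<omega>' = \<kappa>} = {\<omega>' \<in> \<Omega>. f \<omega>' = f \<omega> \<and> \<omega>' \<in> A}"
      using fibre_B[OF \<omega>(1), of "\<lambda>\<omega>'. \<omega>' \<in> A"] \<omega>(2) by auto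
    moreover have "{\<omega>' \<in> B. f \<omega>' = \<kappa>} = {\<omega>' \<in> \<Omega>. f \<omega>' = f \<omega>}"
      using fibre_B[OF \<omega>(1), of "\<lambda>_. True"] \<omega>(2) by auto
    ultimately show "real (card {\<omega>' \<in> A \<inter> B. f \<omega>' = \<kappa>}) \<le> p * real (card {\<omega>' \<in> B. f \<omega>' = \<kappa>})"
      using fibre \<omega> assms(2) by auto
  qed
  also have "\<dots> = p * (\<Sum>\<kappa>\<in>f ` B. \<Sum>\<omega>\<in>{\<omega> \<in> B. f \<omega> = \<kappa>}. 1)"
    by (simp add: sum_distrib_left)
  also have "\<dots> = p * real (card B)"
    by (subst sum.group) (use fin in auto)
  finally show ?thesis .
qed

text \<open>Events are subsets of a finite sample space \<open>\<Omega>\<close> with the uniform distribution, so all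
  (conditional) probabilities are stated as ratios of cardinalities.\<close>
definition avoiding :: "'b set \<Rightarrow> ('i \<Rightarrow> 'b set) \<Rightarrow> 'i set \<Rightarrow> 'b set" where
  "avoiding \<Omega> A S = {\<omega> \<in> \<Omega>. \<forall>w\<in>S. \<omega> \<notin> A w}"

lemma avoiding_empty [simp]: "avoiding \<Omega> A {} = \<Omega>"
  by (simp add: avoiding_def)

lemma avoiding_insert: "avoiding \<Omega> A (insert w S) = avoiding \<Omega> A S - A w"
  by (auto simp: avoiding_def)

lemma card_avoiding_insert_ge:
  assumes "finite \<Omega>"
    and "real (card (A w \<inter> avoiding \<Omega> A S)) \<le> x * real (card (avoiding \<Omega> A S))"
  shows "(1 - x) * real (card (avoiding \<Omega> A S)) \<le> real (card (avoiding \<Omega> A (insert w S)))"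
proof -
  have fin: "finite (avoiding \<Omega> A S)"
    using assms(1) by (simp add: avoiding_def)
  have "card (avoiding \<Omega> A (insert w S))
          = card (avoiding \<Omega> A S) - card (A w \<inter> avoiding \<Omega> A S)"
    using fin by (simp add: avoiding_insert card_Diff_subset_Int Int_commute)
  moreover have "card (A w \<inter> avoiding \<Omega> A S) \<le> card (avoiding \<Omega> A S)"
    using fin by (intro card_mono) auto
  ultimately show ?thesis
    using assms(2) by (simp add: of_nat_diff algebra_simps)
qed

lemma card_avoiding_Un_ge:
  assumes "finite \<Omega>" "finite T" "x \<le> 1"
    and "\<And>w T'. w \<in> T \<Longrightarrow> T' \<subseteq> T - {w} \<Longrightarrow>
      real (card (A w \<inter> avoiding \<Omega> A (S \<union> T'))) \<le> x * real (card (avoiding \<Omega> A (S \<union> T')))"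
  shows "(1 - x) ^ card T * real (card (avoiding \<Omega> A S)) \<le> real (card (avoiding \<Omega> A (S \<union> T)))"
  using assms(2,4)
proof (induction T rule: finite_induct)
  case empty
  then show ?case by simp
next
  case (insert w T)
  have "(1 - x) ^ card (insert w T) * real (card (avoiding \<Omega> A S))
          = (1 - x) * ((1 - x) ^ card T * real (card (avoiding \<Omega> A S)))"
    using insert.hyps by simp
  also have "\<dots> \<le> (1 - x) * real (card (avoiding \<Omega> A (S \<union> T)))"
    using insert assms(3) by (intro mult_left_mono) auto
  also have "\<dots> \<le> real (card (avoiding \<Omega> A (insert w (S \<union> T))))"
    using insert by (intro card_avoiding_insert_ge assms(1)) auto
  finally show ?case by simp
qed

text \<open>The events depending on \<open>v\<close> are peeled off one
  at a time, each costing a factor \<open>1 - x\<close>; the remaining ones are independent of \<open>A v\<close>.\<close>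
lemma local_lemma_conditional_bound:
  assumes fin: "finite \<Omega>" "\<Omega> \<noteq> {}" "finite I"
    and dep: "\<And>v. v \<in> I \<Longrightarrow> card (\<Gamma> v \<inter> I) \<le> D"
    and indep: "\<And>v S. v \<in> I \<Longrightarrow> S \<subseteq> I - \<Gamma> v - {v} \<Longrightarrow>
      real (card (A v \<inter> avoiding \<Omega> A S)) \<le> p * real (card (avoiding \<Omega> A S))"
    and x: "0 \<le> x" "x < 1" and px: "p \<le> x * (1 - x) ^ D"
    and S: "S \<subseteq> I"
  shows "avoiding \<Omega> A S \<noteq> {}
    \<and> (\<forall>v \<in> I - S. real (card (A v \<inter> avoiding \<Omega> A S)) \<le> x * real (card (avoiding \<Omega> A S)))"
  using S
proof (induction "card S" arbitrary: S rule: less_induct)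
  case less
  have finS: "finite S" using less.prems fin(3) finite_subset by blast
  have IH: "\<And>S'. S' \<subset> S \<Longrightarrow> avoiding \<Omega> A S' \<noteq> {}
      \<and> (\<forall>v \<in> I - S'. real (card (A v \<inter> avoiding \<Omega> A S')) \<le> x * real (card (avoiding \<Omega> A S')))"
    using less finS by (meson psubset_card_mono psubset_imp_subset subset_trans)
  have ne: "avoiding \<Omega> A S \<noteq> {}"
  proof (cases "S = {}")
    case True
    then show ?thesis using fin by simp
  next
    case False
    then obtain w where w: "w \<in> S" by blast
    have "avoiding \<Omega> A (S - {w}) \<noteq> {}"
      using IH[of "S - {w}"] w by blast
    then have "0 < (1 - x) * real (card (avoiding \<Omega> A (S - {w})))"
      using x fin(1) by (simp add: avoiding_def card_gt_0_iff)
    also have "\<dots> \<le> real (card (avoiding \<Omega> A (insert w (S - {w}))))"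
      using IH[of "S - {w}"] less.prems w by (intro card_avoiding_insert_ge fin(1)) auto
    finally show ?thesis
      using w by (auto simp: insert_absorb)
  qed
  have "real (card (A v \<inter> avoiding \<Omega> A S)) \<le> x * real (card (avoiding \<Omega> A S))"
    if v: "v \<in> I - S" for v
  proof -
    define far where "far = S - \<Gamma> v"
    define near where "near = S \<inter> \<Gamma> v"
    have "card near \<le> card (\<Gamma> v \<inter> I)"
      using less.prems fin(3) by (intro card_mono) (auto simp: near_def)
    also have "\<dots> \<le> D"
      using dep v by blast
    finally have decay: "(1 - x) ^ D \<le> (1 - x) ^ card near"
      using x by (intro power_decreasing) auto
    have "(1 - x) ^ card near * real (card (avoiding \<Omega> A far))
            \<le> real (card (avoiding \<Omega> A (far \<union> near)))"
    proof (rule card_avoiding_Un_ge)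
      fix w T' assume "w \<in> near" "T' \<subseteq> near - {w}"
      then show "real (card (A w \<inter> avoiding \<Omega> A (far \<union> T')))
                   \<le> x * real (card (avoiding \<Omega> A (far \<union> T')))"
        using IH[of "far \<union> T'"] less.prems by (auto simp: far_def near_def)
    qed (use fin finS x in \<open>auto simp: near_def\<close>)
    also have "far \<union> near = S" by (auto simp: far_def near_def)
    finally have peel: "(1 - x) ^ card near * real (card (avoiding \<Omega> A far))
                          \<le> real (card (avoiding \<Omega> A S))" .
    have "real (card (A v \<inter> avoiding \<Omega> A S)) \<le> real (card (A v \<inter> avoiding \<Omega> A far))"
      using fin(1) by (intro of_nat_mono card_mono) (auto simp: avoiding_def far_def)
    also have "\<dots> \<le> p * real (card (avoiding \<Omega> A far))"
      using v less.prems by (intro indep) (auto simp: far_def)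
    also have "\<dots> \<le> x * ((1 - x) ^ card near * real (card (avoiding \<Omega> A far)))"
      using px decay x
      by (metis (no_types) mult.assoc mult_left_mono mult_right_mono of_nat_0_le_iff order_trans)
    also have "\<dots> \<le> x * real (card (avoiding \<Omega> A S))"
      using peel x by (intro mult_left_mono) auto
    finally show ?thesis .
  qed
  then show ?case using ne by blast
qed

lemma exp_local_lemma_condition:
  fixes D :: nat and p :: real
  assumes "D \<ge> 1" "exp 1 * p * (real D + 1) \<le> 1"
  shows "p \<le> 1 / (real D + 1) * (1 - 1 / (real D + 1)) ^ D"
proof -
  have "(1 + 1 / real D) ^ D \<le> exp (1 / real D) ^ D"
    using exp_ge_add_one_self_aux[of "1 / real D"] by (intro power_mono) auto
  also have "\<dots> = exp 1"
    using assms(1) by (simp flip: exp_of_nat_mult)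
  finally have "1 / exp 1 \<le> 1 / (1 + 1 / real D) ^ D"
    by (intro divide_left_mono) (auto intro!: mult_pos_pos zero_less_power add_pos_nonneg)
  also have "\<dots> = (1 - 1 / (real D + 1)) ^ D"
    using assms(1) by (simp add: field_simps power_one_over)
  finally have "1 / (real D + 1) * (1 / exp 1) \<le> 1 / (real D + 1) * (1 - 1 / (real D + 1)) ^ D"
    by (intro mult_left_mono) auto
  moreover have "p \<le> 1 / (exp 1 * (real D + 1))"
    using assms(2) by (subst pos_le_divide_eq) (auto simp: algebra_simps intro: add_pos_nonneg)
  ultimately show ?thesis
    by (simp add: mult.commute)
qed

lemma lovasz_local_lemma_counting:
  assumes "finite \<Omega>" "\<Omega> \<noteq> {}" "finite I"
    and "\<And>v. v \<in> I \<Longrightarrow> card (\<Gamma> v \<inter> I) \<le> D"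
    and "\<And>v S. v \<in> I \<Longrightarrow> S \<subseteq> I - \<Gamma> v - {v} \<Longrightarrow>
      real (card (A v \<inter> avoiding \<Omega> A S)) \<le> p * real (card (avoiding \<Omega> A S))"
    and "D \<ge> 1" "exp 1 * p * (real D + 1) \<le> 1"
  shows "avoiding \<Omega> A I \<noteq> {}"
proof -
  define x where "x = 1 / (real D + 1)"
  have x: "0 \<le> x" "x < 1"
    using assms(6) by (auto simp: x_def field_simps)
  have "p \<le> x * (1 - x) ^ D"
    unfolding x_def by (rule exp_local_lemma_condition[OF assms(6,7)])
  then show ?thesis
    using local_lemma_conditional_bound[of \<Omega> I \<Gamma> D A p x I, OF assms(1-5) x] by blast
qed

section \<open>Pairings\<close>

definition pick :: "('a \<times> 'a) set \<Rightarrow> 'a \<times> 'a \<Rightarrow> 'a" where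
  "pick R p = (if p \<in> R then fst p else snd p)"

lemma pick_mem: "pick R p \<in> {fst p, snd p}"
  by (simp add: pick_def)

definition unmatched :: "('a \<Rightarrow> 'k) \<Rightarrow> ('a \<times> 'a) set \<Rightarrow> 'a set \<Rightarrow> 'a \<Rightarrow> bool" where
  "unmatched \<kappa> J Z x \<longleftrightarrow> x \<in> Z \<or> (\<exists>p\<in>J. x \<in> {fst p, snd p} \<and> \<kappa> (fst p) \<noteq> \<kappa> (snd p))"

lemma unmatched_insert_pair:
  "\<kappa> a = \<kappa> b \<Longrightarrow> unmatched \<kappa> (insert (a, b) J) Z x \<longleftrightarrow> unmatched \<kappa> J Z x"
  by (auto simp: unmatched_def)

text \<open>\<open>J\<close> pairs up all vertices of \<open>V\<close> except those in \<open>Z\<close>; a set \<open>R \<subseteq> J\<close> encodes the choice of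
  one vertex from every pair, namely the first one for the pairs in \<open>R\<close>.\<close>
locale pairing =
  fixes V :: "'a set" and J :: "('a \<times> 'a) set" and Z :: "'a set"
  assumes finite_V: "finite V"
    and pair_in: "p \<in> J \<Longrightarrow> fst p \<in> V \<and> snd p \<in> V \<and> fst p \<noteq> snd p"
    and pairs_disjoint: "p \<in> J \<Longrightarrow> q \<in> J \<Longrightarrow> p \<noteq> q \<Longrightarrow> {fst p, snd p} \<inter> {fst q, snd q} = {}"
    and unpaired_subset: "Z \<subseteq> V"
    and unpaired_disjoint: "p \<in> J \<Longrightarrow> fst p \<notin> Z \<and> snd p \<notin> Z"
    and covers: "V \<subseteq> Z \<union> (\<Union>p\<in>J. {fst p, snd p})"
    and card_unpaired: "card Z \<le> 1"
begin

lemma finite_J: "finite J"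
proof -
  have "J \<subseteq> V \<times> V"
    using pair_in by (metis mem_Times_iff subsetI)
  then show ?thesis using finite_V finite_subset by blast
qed

lemma finite_Z: "finite Z"
  using unpaired_subset finite_V finite_subset by blast

lemma pick_in: "p \<in> J \<Longrightarrow> pick R p \<in> V"
  using pick_mem[of R p] pair_in[of p] by auto

lemma pick_notin_Z: "p \<in> J \<Longrightarrow> pick R p \<notin> Z"
  using pick_mem[of R p] unpaired_disjoint[of p] by auto

lemma pick_eq_pick_iff:
  assumes "p \<in> J" "q \<in> J"
  shows "pick R p = pick R' q \<longleftrightarrow> p = q \<and> (p \<in> R \<longleftrightarrow> p \<in> R')"
proof
  assume eq: "pick R p = pick R' q"
  show "p = q \<and> (p \<in> R \<longleftrightarrow> p \<in> R')"
  proof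
    show "p = q"
    proof (rule ccontr)
      assume "p \<noteq> q"
      then have "{fst p, snd p} \<inter> {fst q, snd q} = {}"
        by (rule pairs_disjoint[OF assms])
      moreover have "pick R p \<in> {fst p, snd p} \<inter> {fst q, snd q}"
        using eq pick_mem[of R p] pick_mem[of R' q] by simp
      ultimately show False by simp
    qed
    then show "p \<in> R \<longleftrightarrow> p \<in> R'"
      using eq pair_in[OF assms(1)] unfolding pick_def by (cases "p \<in> R"; cases "p \<in> R'") auto
  qed
qed (auto simp: pick_def)

lemma inj_on_pick: "inj_on (pick R) J"
  by (rule inj_onI) (simp add: pick_eq_pick_iff)

definition half :: "('a \<times> 'a) set \<Rightarrow> 'a set" where
  "half R = Z \<union> pick R ` J"

lemma half_subset: "half R \<subseteq> V"
  using unpaired_subset pick_in by (auto simp: half_def)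

lemma card_half: "card (half R) = card Z + card J"
proof -
  have "Z \<inter> pick R ` J = {}" using pick_notin_Z by blast
  then show ?thesis
    using finite_Z finite_J inj_on_pick by (simp add: half_def card_Un_disjoint card_image)
qed

lemma diff_half: "V - half R = pick (J - R) ` J"
proof
  show "V - half R \<subseteq> pick (J - R) ` J"
  proof
    fix x assume x: "x \<in> V - half R"
    then obtain p where p: "p \<in> J" "x \<in> {fst p, snd p}"
      using covers by (auto simp: half_def)
    moreover have "x \<noteq> pick R p" using x p by (auto simp: half_def)
    ultimately have "x = pick (J - R) p" by (auto simp: pick_def)
    then show "x \<in> pick (J - R) ` J" using p by blast
  qed
  show "pick (J - R) ` J \<subseteq> V - half R"
    using pick_in pick_notin_Z by (auto simp: half_def pick_eq_pick_iff)
qed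

lemma card_V: "card V = card Z + 2 * card J"
proof -
  have "card (V - half {}) = card V - card (half {})"
    using finite_V half_subset by (intro card_Diff_subset) (auto intro: finite_subset)
  moreover have "card (half {}) \<le> card V"
    using finite_V half_subset by (rule card_mono)
  moreover have "card (V - half {}) = card J"
    using finite_J inj_on_pick by (simp add: diff_half card_image)
  ultimately show ?thesis
    by (simp add: card_half)
qed

lemma card_half_eq: "card (half R) = nat \<lceil>real (card V) / 2\<rceil>"
proof -
  have "nat \<lceil>real (card Z + 2 * card J) / 2\<rceil> = card Z + card J"
  proof (cases "card Z = 0")
    case False
    then have "card Z = 1" using card_unpaired by simp
    moreover have "\<lceil>real (1 + 2 * card J) / 2\<rceil> = int (1 + card J)"
      by (rule ceiling_unique) (simp_all add: field_simps)
    ultimately show ?thesis by simp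
  qed simp
  then show ?thesis by (simp add: card_V card_half)
qed

lemma unmatched_in: "unmatched \<kappa> J Z x \<Longrightarrow> x \<in> V"
  using unpaired_subset pair_in by (auto simp: unmatched_def)

lemma card_class_half_le:
  "card {x\<in>V. \<kappa> x = c \<and> x \<in> half R}
     \<le> card {x\<in>V. \<kappa> x = c \<and> unmatched \<kappa> J Z x} + card {p\<in>J. \<kappa> (fst p) = c \<and> \<kappa> (snd p) = c}"
proof -
  define U where "U = {x\<in>V. \<kappa> x = c \<and> unmatched \<kappa> J Z x}"
  define P where "P = {p\<in>J. \<kappa> (fst p) = c \<and> \<kappa> (snd p) = c}"
  have "x \<in> U \<union> pick R ` P" if x: "x \<in> V" "\<kappa> x = c" "x \<in> half R" for x
  proof (cases "x \<in> Z")
    case True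
    then show ?thesis using x by (simp add: U_def unmatched_def)
  next
    case False
    then obtain p where p: "p \<in> J" "x = pick R p" using x(3) by (auto simp: half_def)
    then have "x \<in> {fst p, snd p}" using pick_mem[of R p] by simp
    then show ?thesis
      using x p by (cases "\<kappa> (fst p) = \<kappa> (snd p)") (auto simp: U_def P_def unmatched_def)
  qed
  then have "card {x\<in>V. \<kappa> x = c \<and> x \<in> half R} \<le> card (U \<union> pick R ` P)"
    using finite_V finite_J by (intro card_mono) (auto simp: U_def P_def)
  also have "\<dots> \<le> card U + card (pick R ` P)"
    by (rule card_Un_le)
  also have "\<dots> \<le> card U + card P"
    using card_image_le[of P "pick R"] finite_J by (simp add: P_def)
  finally show ?thesis by (simp add: U_def P_def)
qed

lemma card_class_pairs_le:
  "card {p\<in>J. \<kappa> (fst p) = c \<and> \<kappa> (snd p) = c} \<le> card {x\<in>V. \<kappa> x = c \<and> x \<in> pick R ` J}"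
proof -
  define P where "P = {p\<in>J. \<kappa> (fst p) = c \<and> \<kappa> (snd p) = c}"
  have "pick R p \<in> {x\<in>V. \<kappa> x = c \<and> x \<in> pick R ` J}" if "p \<in> P" for p
    using that pick_in[of p R] pick_mem[of R p] by (auto simp: P_def)
  then have "card (pick R ` P) \<le> card {x\<in>V. \<kappa> x = c \<and> x \<in> pick R ` J}"
    using finite_V by (intro card_mono) auto
  moreover have "card (pick R ` P) = card P"
    using inj_on_pick by (intro card_image) (auto simp: P_def intro: inj_on_subset)
  ultimately show ?thesis by (simp add: P_def)
qed

lemma class_balanced:
  assumes "card {x\<in>V. \<kappa> x = c \<and> unmatched \<kappa> J Z x} \<le> 1"
  shows "2 * card {x\<in>V. \<kappa> x = c \<and> x \<in> half R} \<le> card {x\<in>V. \<kappa> x = c} + 1"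
    and "2 * card {x\<in>V. \<kappa> x = c \<and> x \<notin> half R} \<le> card {x\<in>V. \<kappa> x = c} + 1"
proof -
  define inside where "inside R' = {x\<in>V. \<kappa> x = c \<and> x \<in> half R'}" for R'
  define outside where "outside = {x\<in>V. \<kappa> x = c \<and> x \<notin> half R}"
  define pairs where "pairs = card {p\<in>J. \<kappa> (fst p) = c \<and> \<kappa> (snd p) = c}"
  have half_le: "card (inside R') \<le> 1 + pairs" for R'
    using card_class_half_le[of \<kappa> c R'] assms by (simp add: inside_def pairs_def)
  have pairs_le: "pairs \<le> card {x\<in>V. \<kappa> x = c \<and> x \<in> pick R' ` J}" for R'
    using card_class_pairs_le by (simp add: pairs_def)
  have outside_eq: "outside = {x\<in>V. \<kappa> x = c \<and> x \<in> pick (J - R) ` J}"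
    using diff_half[of R] by (auto simp: outside_def)
  have "card {x\<in>V. \<kappa> x = c \<and> x \<in> pick R ` J} \<le> card (inside R)"
    using finite_V by (intro card_mono) (auto simp: inside_def half_def)
  moreover have "card outside \<le> card (inside (J - R))"
    unfolding outside_eq using finite_V by (intro card_mono) (auto simp: inside_def half_def)
  ultimately have "card outside \<le> 1 + card (inside R)"
    using half_le[of "J - R"] pairs_le[of R] by linarith
  moreover have "card (inside R) \<le> 1 + card outside"
    using half_le[of R] pairs_le[of "J - R"] unfolding outside_eq by linarith
  moreover have "card {x\<in>V. \<kappa> x = c} = card (inside R) + card outside"
  proof -
    have "{x\<in>V. \<kappa> x = c} = inside R \<union> outside" "inside R \<inter> outside = {}"
      by (auto simp: inside_def outside_def)
    moreover have "finite (inside R)" "finite outside"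
      using finite_V by (simp_all add: inside_def outside_def)
    ultimately show ?thesis
      by (simp add: card_Un_disjoint)
  qed
  ultimately have "2 * card (inside R) \<le> card {x\<in>V. \<kappa> x = c} + 1"
    and "2 * card outside \<le> card {x\<in>V. \<kappa> x = c} + 1"
    by linarith+
  then show "2 * card {x\<in>V. \<kappa> x = c \<and> x \<in> half R} \<le> card {x\<in>V. \<kappa> x = c} + 1"
    and "2 * card {x\<in>V. \<kappa> x = c \<and> x \<notin> half R} \<le> card {x\<in>V. \<kappa> x = c} + 1"
    unfolding inside_def outside_def .
qed

end

lemma pairing_insert_pair:
  assumes "pairing V J Z" "a \<notin> V" "b \<notin> V" "a \<noteq> b"
  shows "pairing (insert a (insert b V)) (insert (a, b) J) Z"
proof -
  interpret pairing V J Z by fact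
  have new: "{fst q, snd q} \<inter> {a, b} = {}" if "q \<in> J" for q
    using pair_in[OF that] assms(2,3) by auto
  show ?thesis
  proof
    show "finite (insert a (insert b V))"
      using finite_V by simp
    show "Z \<subseteq> insert a (insert b V)"
      using unpaired_subset by blast
    show "insert a (insert b V) \<subseteq> Z \<union> (\<Union>p\<in>insert (a, b) J. {fst p, snd p})"
      using covers by auto
    show "card Z \<le> 1"
      by (rule card_unpaired)
  next
    fix p assume p: "p \<in> insert (a, b) J"
    show "fst p \<in> insert a (insert b V) \<and> snd p \<in> insert a (insert b V) \<and> fst p \<noteq> snd p"
      using p pair_in[of p] assms(4) by auto
    show "fst p \<notin> Z \<and> snd p \<notin> Z"
      using p unpaired_disjoint[of p] unpaired_subset assms(2,3) by auto
  next
    fix p q assume "p \<in> insert (a, b) J" "q \<in> insert (a, b) J" "p \<noteq> q"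
    then consider "p = (a, b)" "q \<in> J" | "q = (a, b)" "p \<in> J" | "p \<in> J" "q \<in> J"
      by auto
    then show "{fst p, snd p} \<inter> {fst q, snd q} = {}"
    proof cases
      case 1
      then show ?thesis using new[of q] by auto
    next
      case 2
      then show ?thesis using new[of p] by auto
    next
      case 3
      then show ?thesis using pairs_disjoint \<open>p \<noteq> q\<close> by blast
    qed
  qed
qed

text \<open>Pair vertices of the same class as long as possible; once the classes are all singletons,
  pair arbitrarily.\<close>
lemma pairing_exists:
  assumes "finite V"
  shows "\<exists>J Z. pairing V J Z \<and> (\<forall>c. card {x\<in>V. \<kappa> x = c \<and> unmatched \<kappa> J Z x} \<le> 1)"
  using assms
proof (induction "card V" arbitrary: V rule: less_induct)
  case less
  show ?case
  proof (cases "card V \<le> 1")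
    case True
    then have "pairing V {} V" using less.prems by (simp add: pairing_def)
    moreover have "card {x\<in>V. \<kappa> x = c \<and> unmatched \<kappa> {} V x} \<le> 1" for c
      using True card_mono[OF less.prems, of "{x\<in>V. \<kappa> x = c \<and> unmatched \<kappa> {} V x}"] by auto
    ultimately show ?thesis by blast
  next
    case False
    obtain a b where ab: "a \<in> V" "b \<in> V" "a \<noteq> b" "\<kappa> a = \<kappa> b \<or> inj_on \<kappa> V"
    proof (cases "inj_on \<kappa> V")
      case True
      obtain a b where "a \<in> V" "b \<in> V" "a \<noteq> b"
        using False card_le_Suc0_iff_eq[OF less.prems] by auto
      then show ?thesis using that True by blast
    next
      case False
      then show ?thesis using that unfolding inj_on_def by blast
    qed
    define V' where "V' = V - {a, b}"
    have V: "V = insert a (insert b V')" using ab by (auto simp: V'_def)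
    have "finite V'"
      using less.prems by (simp add: V'_def)
    moreover have "card V' < card V"
      by (rule psubset_card_mono) (use ab less.prems in \<open>auto simp: V'_def\<close>)
    ultimately obtain J Z where P: "pairing V' J Z"
      and B: "\<forall>c. card {x\<in>V'. \<kappa> x = c \<and> unmatched \<kappa> J Z x} \<le> 1"
      using less.hyps by meson
    have "pairing V (insert (a, b) J) Z"
      unfolding V using ab by (intro pairing_insert_pair[OF P]) (auto simp: V'_def)
    moreover have "card {x\<in>V. \<kappa> x = c \<and> unmatched \<kappa> (insert (a, b) J) Z x} \<le> 1" for c
    proof (cases "\<kappa> a = \<kappa> b")
      case True
      have "{x\<in>V. \<kappa> x = c \<and> unmatched \<kappa> (insert (a, b) J) Z x}
              = {x\<in>V'. \<kappa> x = c \<and> unmatched \<kappa> J Z x}"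
        using pairing.unmatched_in[OF P] unfolding unmatched_insert_pair[of \<kappa> a b, OF True] V by blast
      then show ?thesis using B by simp
    next
      case False
      then have "inj_on \<kappa> V" using ab by blast
      then have "card {x\<in>V. \<kappa> x = c} \<le> 1"
        using less.prems by (auto simp: card_le_Suc0_iff_eq inj_on_def)
      moreover have "card {x\<in>V. \<kappa> x = c \<and> unmatched \<kappa> (insert (a, b) J) Z x} \<le> card {x\<in>V. \<kappa> x = c}"
        using less.prems by (intro card_mono) auto
      ultimately show ?thesis by linarith
    qed
    ultimately show ?thesis by blast
  qed
qed

section \<open>A random half of a pairing\<close>

lemma card_Collect_bij_betw:
  assumes "bij_betw f A B"
  shows "card {a\<in>A. P (f a)} = card {b\<in>B. P b}"
  using bij_betw_Collect[OF assms, of P "\<lambda>a. P (f a)"] by (rule bij_betw_same_card) simp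

locale halving = pairing V J Z for V :: "'a set" and J Z +
  fixes E' :: "'a \<Rightarrow> 'a \<Rightarrow> bool" and d t \<Delta> :: nat
  assumes sym: "E' u v \<Longrightarrow> E' v u"
    and degree_ge: "v \<in> V \<Longrightarrow> d \<le> deg_in E' V v"
    and degree_le: "v \<in> V \<Longrightarrow> deg_in E' V v \<le> \<Delta>"
    and t_pos: "0 < t" and t_le: "2 * t \<le> d"
    and exp_condition: "exp 1 * (2 * real \<Delta> ^ 2 + 1) \<le> exp (real t ^ 2 / (2 * real d))"
    and V_nonempty: "V \<noteq> {}"
begin

definition nbhd :: "'a \<Rightarrow> 'a set" where
  "nbhd v = {u\<in>V. E' v u}"

definition split_pairs :: "'a \<Rightarrow> ('a \<times> 'a) set" where
  "split_pairs v = {p\<in>J. (fst p \<in> nbhd v) \<noteq> (snd p \<in> nbhd v)}"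

definition inner_pairs :: "'a \<Rightarrow> ('a \<times> 'a) set" where
  "inner_pairs v = {p\<in>J. fst p \<in> nbhd v \<and> snd p \<in> nbhd v}"

definition hits :: "'a \<Rightarrow> ('a \<times> 'a) set \<Rightarrow> ('a \<times> 'a) set" where
  "hits v R = {p \<in> split_pairs v. pick R p \<in> nbhd v}"

text \<open>The number of hits is a sum of independent fair coins, one per split pair; \<open>v\<close> keeps
  degree \<open>d / 2 - t\<close> in the chosen half unless it falls \<open>slack v\<close> below its mean.\<close>
definition slack :: "'a \<Rightarrow> real" where
  "slack v = (real (card (nbhd v)) - real d) / 2 + real t"

definition deficient :: "'a \<Rightarrow> ('a \<times> 'a) set set" where
  "deficient v = {R. real (card (hits v R)) < real (card (split_pairs v)) / 2 - slack v}"

definition deficiency_bound :: real where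
  "deficiency_bound = exp (- (real t ^ 2 / (2 * real d)))"

lemma card_nbhd: "card (nbhd v) = deg_in E' V v"
  by (simp add: nbhd_def deg_in_def)

lemma finite_nbhd: "finite (nbhd v)"
  using finite_V by (simp add: nbhd_def)

lemma finite_split_pairs: "finite (split_pairs v)"
  using finite_J by (simp add: split_pairs_def)

lemma hits_iff: "p \<in> hits v R \<longleftrightarrow> p \<in> split_pairs v \<and> (p \<in> R \<longleftrightarrow> fst p \<in> nbhd v)"
  by (auto simp: hits_def split_pairs_def pick_def)

lemma hits_cong:
  "(\<And>p. p \<in> split_pairs w \<Longrightarrow> p \<in> R \<longleftrightarrow> p \<in> R') \<Longrightarrow> hits w R = hits w R'"
  by (auto simp: hits_iff)

lemma pick_split_pair_in_nbhd:
  "p \<in> split_pairs v \<Longrightarrow> pick {p. fst p \<in> nbhd v} p \<in> nbhd v"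
  by (auto simp: split_pairs_def pick_def)

lemma card_split_pairs_le: "card (split_pairs v) \<le> card (nbhd v)"
proof -
  have "card (split_pairs v) = card (pick {p. fst p \<in> nbhd v} ` split_pairs v)"
    using inj_on_pick by (intro card_image[symmetric]) (auto simp: split_pairs_def intro: inj_on_subset)
  also have "\<dots> \<le> card (nbhd v)"
    using finite_nbhd pick_split_pair_in_nbhd by (intro card_mono) auto
  finally show ?thesis .
qed

lemma card_nbhd_le:
  "card (nbhd v) \<le> card (nbhd v \<inter> Z) + 2 * card (inner_pairs v) + card (split_pairs v)"
proof -
  define side where "side = pick {p. fst p \<in> nbhd v}"
  have "nbhd v \<subseteq> (nbhd v \<inter> Z) \<union> (fst ` inner_pairs v \<union> snd ` inner_pairs v) \<union> side ` split_pairs v"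
  proof
    fix u assume u: "u \<in> nbhd v"
    then have "u \<in> Z \<or> (\<exists>p\<in>J. u \<in> {fst p, snd p})"
      using covers by (auto simp: nbhd_def)
    then show "u \<in> (nbhd v \<inter> Z) \<union> (fst ` inner_pairs v \<union> snd ` inner_pairs v) \<union> side ` split_pairs v"
    proof
      assume "\<exists>p\<in>J. u \<in> {fst p, snd p}"
      then obtain p where p: "p \<in> J" "u \<in> {fst p, snd p}" by blast
      show ?thesis
      proof (cases "p \<in> inner_pairs v")
        case True
        then show ?thesis using p by (auto intro: rev_image_eqI)
      next
        case False
        then have "p \<in> split_pairs v" "u = side p"
          using p u by (auto simp: inner_pairs_def split_pairs_def side_def pick_def)
        then show ?thesis by blast
      qed
    qed (use u in blast)
  qed
  then have "card (nbhd v)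
      \<le> card ((nbhd v \<inter> Z) \<union> (fst ` inner_pairs v \<union> snd ` inner_pairs v) \<union> side ` split_pairs v)"
    using finite_Z finite_J finite_split_pairs by (intro card_mono) (auto simp: inner_pairs_def)
  also have "\<dots> \<le> card (nbhd v \<inter> Z) + (card (fst ` inner_pairs v) + card (snd ` inner_pairs v))
                  + card (side ` split_pairs v)"
    by (meson card_Un_le add_le_mono le_refl order_trans)
  also have "\<dots> \<le> card (nbhd v \<inter> Z) + 2 * card (inner_pairs v) + card (split_pairs v)"
    using card_image_le[of "inner_pairs v" fst] card_image_le[of "inner_pairs v" snd]
      card_image_le[of "split_pairs v" side] finite_J finite_split_pairs
    by (simp add: inner_pairs_def)
  finally show ?thesis .
qed

lemma card_nbhd_half_ge:
  "card (nbhd v \<inter> Z) + card (inner_pairs v) + card (hits v R) \<le> card (nbhd v \<inter> half R)"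
proof -
  have sub: "inner_pairs v \<union> hits v R \<subseteq> J"
    by (auto simp: inner_pairs_def hits_def split_pairs_def)
  have "inner_pairs v \<inter> hits v R = {}"
    by (auto simp: inner_pairs_def hits_def split_pairs_def)
  then have "card (pick R ` (inner_pairs v \<union> hits v R)) = card (inner_pairs v) + card (hits v R)"
    using inj_on_subset[OF inj_on_pick sub] finite_subset[OF sub finite_J]
    by (simp add: card_image card_Un_disjoint)
  moreover have "(nbhd v \<inter> Z) \<inter> pick R ` (inner_pairs v \<union> hits v R) = {}"
    using sub pick_notin_Z by blast
  then have "card ((nbhd v \<inter> Z) \<union> pick R ` (inner_pairs v \<union> hits v R))
               = card (nbhd v \<inter> Z) + card (pick R ` (inner_pairs v \<union> hits v R))"
    using finite_Z finite_subset[OF sub finite_J] by (simp add: card_Un_disjoint)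
  moreover have "pick R p \<in> nbhd v" if "p \<in> inner_pairs v \<union> hits v R" for p
    using that pick_mem[of R p] by (auto simp: inner_pairs_def hits_def)
  then have "(nbhd v \<inter> Z) \<union> pick R ` (inner_pairs v \<union> hits v R) \<subseteq> nbhd v \<inter> half R"
    using sub by (auto simp: half_def)
  then have "card ((nbhd v \<inter> Z) \<union> pick R ` (inner_pairs v \<union> hits v R)) \<le> card (nbhd v \<inter> half R)"
    using finite_nbhd by (intro card_mono) auto
  ultimately show ?thesis by linarith
qed

lemma degree_half_ge:
  assumes "R \<notin> deficient v"
  shows "real d / 2 - real t \<le> real (card (nbhd v \<inter> half R))"
proof -
  have "real (card (nbhd v))
          \<le> real (card (nbhd v \<inter> Z)) + 2 * real (card (inner_pairs v)) + real (card (split_pairs v))"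
    using card_nbhd_le[of v] by linarith
  moreover have "real (card (nbhd v \<inter> Z)) + real (card (inner_pairs v)) + real (card (hits v R))
                   \<le> real (card (nbhd v \<inter> half R))"
    using card_nbhd_half_ge[of v R] by linarith
  moreover have "real (card (split_pairs v)) / 2 - slack v \<le> real (card (hits v R))"
    using assms by (simp add: deficient_def)
  ultimately show ?thesis
    unfolding slack_def using of_nat_0_le_iff[of "card (nbhd v \<inter> Z)", where 'a = real] by argo
qed

lemma slack_ge: "v \<in> V \<Longrightarrow> real t \<le> slack v"
  using degree_ge[of v] by (simp add: slack_def card_nbhd)

lemma exp_slack_le:
  assumes v: "v \<in> V" and "split_pairs v \<noteq> {}"
  shows "exp (- 2 * slack v ^ 2 / real (card (split_pairs v))) \<le> deficiency_bound"
proof -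
  define n where "n = real (card (nbhd v))"
  define k where "k = real (card (split_pairs v))"
  define x where "x = n - real d"
  have x: "x \<ge> 0" using degree_ge[OF v] by (simp add: x_def n_def card_nbhd)
  have k: "0 < k" "k \<le> n"
    using assms(2) finite_split_pairs card_split_pairs_le[of v]
    by (auto simp: k_def n_def card_gt_0_iff)
  have d: "real d > 0" "4 * real d - real t \<ge> 0" using t_pos t_le by auto
  have "2 * slack v = x + 2 * real t"
    by (simp add: slack_def x_def n_def)
  have "(2 * slack v) ^ 2 * real d - real t ^ 2 * n
          = x ^ 2 * real d + x * real t * (4 * real d - real t) + 3 * real t ^ 2 * real d"
    by (simp only: \<open>2 * slack v = x + 2 * real t\<close>) (simp add: x_def power2_eq_square algebra_simps)
  also have "\<dots> \<ge> 0" using x d by simp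
  finally have "real t ^ 2 * n \<le> (2 * slack v) ^ 2 * real d" by simp
  then have "real t ^ 2 / (2 * real d) \<le> 2 * slack v ^ 2 / n"
    using d k by (simp add: field_simps power2_eq_square)
  also have "\<dots> \<le> 2 * slack v ^ 2 / k"
    using k by (intro divide_left_mono) auto
  finally show ?thesis by (simp add: deficiency_bound_def k_def)
qed

lemma bij_betw_hits_fibre:
  assumes "R0 \<subseteq> J"
  shows "bij_betw (hits v) {R\<in>Pow J. R - split_pairs v = R0 - split_pairs v} (Pow (split_pairs v))"
proof (rule bij_betw_byWitness[where f' = "\<lambda>X. (R0 - split_pairs v) \<union> {p\<in>split_pairs v. p \<in> X \<longleftrightarrow> fst p \<in> nbhd v}"])
  show "hits v ` {R\<in>Pow J. R - split_pairs v = R0 - split_pairs v} \<subseteq> Pow (split_pairs v)"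
    by (auto simp: hits_def)
  show "(\<lambda>X. (R0 - split_pairs v) \<union> {p\<in>split_pairs v. p \<in> X \<longleftrightarrow> fst p \<in> nbhd v}) ` Pow (split_pairs v)
          \<subseteq> {R\<in>Pow J. R - split_pairs v = R0 - split_pairs v}"
    using assms by (auto simp: split_pairs_def)
qed (auto simp: hits_iff)

lemma card_deficient_fibre_le:
  assumes v: "v \<in> V" and "R0 \<subseteq> J"
  shows "real (card {R\<in>Pow J. R - split_pairs v = R0 - split_pairs v \<and> R \<in> deficient v})
           \<le> deficiency_bound * real (card {R\<in>Pow J. R - split_pairs v = R0 - split_pairs v})"
proof -
  define K where "K = split_pairs v"
  define F where "F = {R\<in>Pow J. R - K = R0 - K}"
  define small where "small X \<longleftrightarrow> real (card X) < real (card K) / 2 - slack v" for X :: "('a \<times> 'a) set"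
  have bij: "bij_betw (hits v) F (Pow K)"
    unfolding F_def K_def by (rule bij_betw_hits_fibre[OF assms(2)])
  have "{R\<in>Pow J. R - K = R0 - K \<and> R \<in> deficient v} = {R\<in>F. small (hits v R)}"
    by (auto simp: F_def small_def deficient_def K_def)
  then have "card {R\<in>Pow J. R - K = R0 - K \<and> R \<in> deficient v} = card {X\<in>Pow K. small X}"
    using card_Collect_bij_betw[OF bij] by simp
  moreover have "real (card {X\<in>Pow K. small X}) \<le> 2 ^ card K * deficiency_bound"
  proof (cases "K = {}")
    case True
    then show ?thesis
      using slack_ge[OF v] t_pos by (simp add: small_def deficiency_bound_def)
  next
    case False
    have "real (card {X\<in>Pow K. small X}) \<le> 2 ^ card K * exp (- 2 * slack v ^ 2 / real (card K))"
      unfolding small_def using slack_ge[OF v] finite_split_pairs False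
      by (intro card_small_subsets_le) (auto simp: K_def)
    also have "\<dots> \<le> 2 ^ card K * deficiency_bound"
      using exp_slack_le[OF v] False by (simp add: K_def)
    finally show ?thesis .
  qed
  moreover have "card F = 2 ^ card K"
    using bij_betw_same_card[OF bij] finite_split_pairs by (simp add: K_def card_Pow)
  ultimately show ?thesis
    unfolding K_def[symmetric] F_def[symmetric] by (simp add: mult.commute)
qed

text \<open>The event \<open>deficient v\<close> depends only on the choices in \<open>split_pairs v\<close>, so it is mutually
  independent of all events \<open>deficient w\<close> with \<open>split_pairs w\<close> disjoint from \<open>split_pairs v\<close>.\<close>
definition dependents :: "'a \<Rightarrow> 'a set" where
  "dependents v = {w. split_pairs w \<inter> split_pairs v \<noteq> {}}"

lemma card_dependents_le:
  assumes v: "v \<in> V"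
  shows "card (dependents v \<inter> V) \<le> 2 * \<Delta> ^ 2"
proof -
  have "dependents v \<inter> V \<subseteq> (\<Union>p\<in>split_pairs v. nbhd (fst p) \<union> nbhd (snd p))"
  proof
    fix w assume "w \<in> dependents v \<inter> V"
    then obtain p where p: "p \<in> split_pairs w" "p \<in> split_pairs v" and w: "w \<in> V"
      by (auto simp: dependents_def)
    then have "fst p \<in> nbhd w \<or> snd p \<in> nbhd w" by (auto simp: split_pairs_def)
    then have "w \<in> nbhd (fst p) \<or> w \<in> nbhd (snd p)" using w sym by (auto simp: nbhd_def)
    then show "w \<in> (\<Union>p\<in>split_pairs v. nbhd (fst p) \<union> nbhd (snd p))" using p by blast
  qed
  then have "card (dependents v \<inter> V) \<le> card (\<Union>p\<in>split_pairs v. nbhd (fst p) \<union> nbhd (snd p))"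
    by (intro card_mono) (simp_all add: finite_split_pairs finite_nbhd)
  also have "\<dots> \<le> (\<Sum>p\<in>split_pairs v. card (nbhd (fst p) \<union> nbhd (snd p)))"
    by (rule card_UN_le[OF finite_split_pairs])
  also have "\<dots> \<le> (\<Sum>p\<in>split_pairs v. 2 * \<Delta>)"
  proof (rule sum_mono)
    fix p assume "p \<in> split_pairs v"
    then have "fst p \<in> V" "snd p \<in> V" using pair_in[of p] by (auto simp: split_pairs_def)
    then show "card (nbhd (fst p) \<union> nbhd (snd p)) \<le> 2 * \<Delta>"
      using card_Un_le[of "nbhd (fst p)" "nbhd (snd p)"] degree_le[of "fst p"] degree_le[of "snd p"]
      unfolding card_nbhd by linarith
  qed
  also have "\<dots> \<le> \<Delta> * (2 * \<Delta>)"
    using card_split_pairs_le[of v] degree_le[OF v] by (simp add: card_nbhd)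
  finally show ?thesis by (simp add: power2_eq_square)
qed

lemma deficient_conditional_le:
  assumes v: "v \<in> V" and S: "S \<subseteq> V - dependents v - {v}"
  shows "real (card (deficient v \<inter> avoiding (Pow J) deficient S))
           \<le> deficiency_bound * real (card (avoiding (Pow J) deficient S))"
proof (rule card_Int_le_by_fibres[where f = "\<lambda>R. R - split_pairs v"])
  fix R R' assume R: "R \<in> avoiding (Pow J) deficient S" and R': "R' \<in> Pow J"
    and eq: "R' - split_pairs v = R - split_pairs v"
  have "hits w R' = hits w R" if "w \<in> S" for w
  proof (rule hits_cong)
    fix p assume "p \<in> split_pairs w"
    then have "p \<notin> split_pairs v" using S that by (auto simp: dependents_def)
    then show "p \<in> R' \<longleftrightarrow> p \<in> R" using eq by blast
  qed
  then show "R' \<in> avoiding (Pow J) deficient S"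
    using R R' by (auto simp: avoiding_def deficient_def)
qed (use finite_J card_deficient_fibre_le[OF v] in \<open>auto simp: avoiding_def\<close>)

lemma exists_good_half: "\<exists>R\<subseteq>J. \<forall>v\<in>V. real d / 2 - real t \<le> real (card (nbhd v \<inter> half R))"
proof -
  obtain v where "v \<in> V" using V_nonempty by blast
  then have "2 \<le> \<Delta>" using degree_ge[of v] degree_le[of v] t_pos t_le by linarith
  then have D: "1 \<le> 2 * \<Delta> ^ 2" by (simp add: power2_eq_square)
  have "exp 1 * deficiency_bound * (real (2 * \<Delta> ^ 2) + 1)
          = exp 1 * (2 * real \<Delta> ^ 2 + 1) * exp (- (real t ^ 2 / (2 * real d)))"
    by (simp add: deficiency_bound_def)
  also have "\<dots> \<le> exp (real t ^ 2 / (2 * real d)) * exp (- (real t ^ 2 / (2 * real d)))"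
    using exp_condition by (intro mult_right_mono) auto
  also have "\<dots> = 1" by (simp flip: exp_add)
  finally have "avoiding (Pow J) deficient V \<noteq> {}"
    using D finite_J finite_V card_dependents_le deficient_conditional_le
    by (intro lovasz_local_lemma_counting[where \<Gamma> = dependents and D = "2 * \<Delta> ^ 2"]) auto
  then obtain R where "R \<subseteq> J" "\<forall>v\<in>V. R \<notin> deficient v"
    by (auto simp: avoiding_def)
  then show ?thesis using degree_half_ge by blast
qed

end

section \<open>Iterated halving\<close>

lemma min_degree_le: "finite V \<Longrightarrow> v \<in> V \<Longrightarrow> min_degree V E \<le> deg_in E V v"
  unfolding min_degree_def by (intro Min_le) auto

lemma deg_in_le_max_degree: "finite V \<Longrightarrow> v \<in> V \<Longrightarrow> deg_in E V v \<le> max_degree V E"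
  unfolding max_degree_def by (intro Max_ge) auto

lemma exists_balanced_hamiltonian_half:
  fixes \<kappa> :: "'a \<Rightarrow> 'k"
  assumes graph: "graph V E'" and "V \<noteq> {}" "0 < t" "2 * t \<le> d"
    and useful: "useful d t V E' E" and min_deg: "min_degree V E' \<ge> d"
    and "exp 1 * (2 * real (max_degree V E') ^ 2 + 1) \<le> exp (real t ^ 2 / (2 * real d))"
  shows "\<exists>S\<subseteq>V. hamiltonian_on E S \<and>
           (\<forall>c. 2 * card {x\<in>V. \<kappa> x = c \<and> x \<in> S} \<le> card {x\<in>V. \<kappa> x = c} + 1
              \<and> 2 * card {x\<in>V. \<kappa> x = c \<and> x \<notin> S} \<le> card {x\<in>V. \<kappa> x = c} + 1)"
proof -
  have fin: "finite V" using graph by (simp add: graph_def)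
  obtain J Z where P: "pairing V J Z"
    and B: "\<forall>c. card {x\<in>V. \<kappa> x = c \<and> unmatched \<kappa> J Z x} \<le> 1"
    using pairing_exists[OF fin] by blast
  interpret halving V J Z E' d t "max_degree V E'"
  proof (intro halving.intro halving_axioms.intro P)
    show "E' u v \<Longrightarrow> E' v u" for u v using graph by (simp add: graph_def)
    show "v \<in> V \<Longrightarrow> d \<le> deg_in E' V v" for v using min_deg min_degree_le[OF fin] order_trans by blast
    show "v \<in> V \<Longrightarrow> deg_in E' V v \<le> max_degree V E'" for v by (rule deg_in_le_max_degree[OF fin])
  qed fact+
  obtain R where "R \<subseteq> J" and R: "\<forall>v\<in>V. real d / 2 - real t \<le> real (card (nbhd v \<inter> half R))"
    using exists_good_half by blast
  have "nbhd v \<inter> half R = {u\<in>half R. E' v u}" for v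
    using half_subset by (auto simp: nbhd_def)
  then have "\<forall>v\<in>half R. real (deg_in E' (half R) v) \<ge> real d / 2 - real t"
    using R half_subset[of R] by (auto simp: deg_in_def)
  then have "hamiltonian_on E (half R)"
    using useful half_subset card_half_eq unfolding useful_def by blast
  then show ?thesis
    using half_subset class_balanced[OF B[rule_format]] by blast
qed

lemma exists_hamiltonian_refinement:
  assumes "graph V E'" "V \<noteq> {}" "0 < t" "2 * t \<le> d" "useful d t V E' E" "min_degree V E' \<ge> d"
    "exp 1 * (2 * real (max_degree V E') ^ 2 + 1) \<le> exp (real t ^ 2 / (2 * real d))"
    and "card V \<le> 2 ^ k" "i \<le> k"
  shows "\<exists>Ss. length Ss = i \<and> (\<forall>S\<in>set Ss. S \<subseteq> V \<and> hamiltonian_on E S)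
           \<and> (\<forall>x\<in>V. card {w\<in>V. map (\<lambda>S. w \<in> S) Ss = map (\<lambda>S. x \<in> S) Ss} \<le> 2 ^ (k - i))"
  using \<open>i \<le> k\<close>
proof (induction i)
  case 0
  then show ?case using assms(8) by (intro exI[of _ "[]"]) simp
next
  case (Suc i)
  then obtain Ss where len: "length Ss = i" and Ss: "\<forall>S\<in>set Ss. S \<subseteq> V \<and> hamiltonian_on E S"
    and classes: "\<forall>x\<in>V. card {w\<in>V. map (\<lambda>S. w \<in> S) Ss = map (\<lambda>S. x \<in> S) Ss} \<le> 2 ^ (k - i)"
    by auto
  obtain S where S: "S \<subseteq> V" "hamiltonian_on E S"
    and balanced: "\<forall>c. 2 * card {x\<in>V. map (\<lambda>S. x \<in> S) Ss = c \<and> x \<in> S} \<le> card {x\<in>V. map (\<lambda>S. x \<in> S) Ss = c} + 1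
              \<and> 2 * card {x\<in>V. map (\<lambda>S. x \<in> S) Ss = c \<and> x \<notin> S} \<le> card {x\<in>V. map (\<lambda>S. x \<in> S) Ss = c} + 1"
    using exists_balanced_hamiltonian_half[OF assms(1-7), where \<kappa> = "\<lambda>x. map (\<lambda>S. x \<in> S) Ss"]
    by blast
  have "card {w\<in>V. map (\<lambda>S'. w \<in> S') (S # Ss) = map (\<lambda>S'. x \<in> S') (S # Ss)} \<le> 2 ^ (k - Suc i)"
    if x: "x \<in> V" for x
  proof -
    define c where "c = map (\<lambda>S. x \<in> S) Ss"
    have "card {w\<in>V. map (\<lambda>S. w \<in> S) Ss = c} \<le> 2 * 2 ^ (k - Suc i)"
      using classes x Suc.prems by (simp add: c_def Suc_diff_Suc flip: power_Suc)
    moreover have "{w\<in>V. map (\<lambda>S'. w \<in> S') (S # Ss) = map (\<lambda>S'. x \<in> S') (S # Ss)}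
        = (if x \<in> S then {w\<in>V. map (\<lambda>S. w \<in> S) Ss = c \<and> w \<in> S}
           else {w\<in>V. map (\<lambda>S. w \<in> S) Ss = c \<and> w \<notin> S})"
      by (auto simp: c_def)
    ultimately show ?thesis
      using balanced[rule_format, of c] by (cases "x \<in> S") simp_all
  qed
  then show ?case
    using len Ss S by (intro exI[of _ "S # Ss"]) auto
qed

lemma separating_if_classes_trivial:
  assumes "finite V" and "\<forall>x\<in>V. card {w\<in>V. map (\<lambda>S. w \<in> S) Ss = map (\<lambda>S. x \<in> S) Ss} \<le> 1"
  shows "separating V (set Ss)"
  unfolding separating_def
proof (intro ballI impI)
  fix u v assume uv: "u \<in> V" "v \<in> V" "u \<noteq> v"
  have "{u, v} \<subseteq> {w\<in>V. map (\<lambda>S. w \<in> S) Ss = map (\<lambda>S. u \<in> S) Ss}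
          \<Longrightarrow> card {u, v} \<le> card {w\<in>V. map (\<lambda>S. w \<in> S) Ss = map (\<lambda>S. u \<in> S) Ss}"
    using assms(1) by (intro card_mono) auto
  then have "map (\<lambda>S. v \<in> S) Ss \<noteq> map (\<lambda>S. u \<in> S) Ss"
    using assms(2) uv by fastforce
  then obtain S where "S \<in> set Ss" "(u \<in> S) \<noteq> (v \<in> S)"
    by (auto simp: map_eq_conv)
  moreover have "(u \<in> S) \<noteq> (v \<in> S) \<Longrightarrow> card (S \<inter> {u, v}) = 1"
    by (cases "u \<in> S") auto
  ultimately show "\<exists>S\<in>set Ss. card (S \<inter> {u, v}) = 1" by blast
qed

lemma card_ge_ceiling_log_if_separating:
  assumes "finite V" "V \<noteq> {}" "finite F" "separating V F"
  shows "nat \<lceil>log 2 (real (card V))\<rceil> \<le> card F"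
proof -
  have "inj_on (\<lambda>v. {S\<in>F. v \<in> S}) V"
  proof (rule inj_onI, rule ccontr)
    fix u v assume uv: "u \<in> V" "v \<in> V" "{S\<in>F. u \<in> S} = {S\<in>F. v \<in> S}" "u \<noteq> v"
    then obtain S where "S \<in> F" "card (S \<inter> {u, v}) = 1"
      using assms(4) uv(1,2,4) unfolding separating_def by blast
    moreover have "u \<in> S \<longleftrightarrow> v \<in> S" using uv(3) \<open>S \<in> F\<close> by blast
    ultimately show False using uv(4) by (cases "u \<in> S") auto
  qed
  then have "card V \<le> card (Pow F)"
    using assms(3) by (intro card_inj_on_le) auto
  then have "real (card V) \<le> 2 powr real (card F)"
    using assms(3) by (simp add: card_Pow powr_realpow flip: of_nat_power)
  then have "log 2 (real (card V)) \<le> real (card F)"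
    using assms(1,2) by (simp add: le_powr_iff card_gt_0_iff)
  then show ?thesis by linarith
qed

lemma le_two_power_ceiling_log:
  assumes "n \<ge> (1::nat)"
  shows "n \<le> 2 ^ nat \<lceil>log 2 (real n)\<rceil>"
proof -
  have "real n = 2 powr (log 2 (real n))" using assms by simp
  also have "\<dots> \<le> 2 powr (real (nat \<lceil>log 2 (real n)\<rceil>))"
    using assms by (intro powr_mono) (auto simp: le_nat_iff)
  finally show ?thesis
    by (simp add: powr_realpow flip: of_nat_power of_nat_le_iff)
qed

lemma sh_eqI:
  assumes "finite V" "V \<noteq> {}" "finite F" "\<forall>S\<in>F. S \<subseteq> V \<and> hamiltonian_on E S" "separating V F"
    and "card F \<le> nat \<lceil>log 2 (real (card V))\<rceil>"
  shows "sh V E = nat \<lceil>log 2 (real (card V))\<rceil>"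
proof -
  define X where "X = {F. finite F \<and> (\<forall>S\<in>F. S \<subseteq> V \<and> hamiltonian_on E S) \<and> separating V F}"
  have lower: "nat \<lceil>log 2 (real (card V))\<rceil> \<le> card F'" if "F' \<in> X" for F'
    using that card_ge_ceiling_log_if_separating[OF assms(1,2)] by (simp add: X_def)
  have "F \<in> X" using assms(3-5) by (simp add: X_def)
  moreover have "card F = nat \<lceil>log 2 (real (card V))\<rceil>"
    using le_antisym[OF assms(6) lower[OF \<open>F \<in> X\<close>]] .
  ultimately have "nat \<lceil>log 2 (real (card V))\<rceil> \<in> card ` X"
    by (metis image_eqI)
  then show ?thesis
    unfolding sh_def X_def[symmetric] using lower by (intro cInf_eq_minimum) auto
qed

theorem lemma3p4:
  fixes V :: "'a set" and E E' :: "'a \<Rightarrow> 'a \<Rightarrow> bool" and d t :: nat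
  assumes "graph V E" and "graph V E'" and "\<forall>u v. E' u v \<longrightarrow> E u v"
    and "V \<noteq> {}"
    and "0 < d" and "0 < t" and "2 * t \<le> d"
    and "useful d t V E' E"
    and "min_degree V E' \<ge> d"
    and "exp 1 * (2 * real (max_degree V E') ^ 2 + 1) \<le> exp (real t ^ 2 / (2 * real d))"
  shows "sh V E = nat \<lceil>log 2 (real (card V))\<rceil>"
proof -
  define k where "k = nat \<lceil>log 2 (real (card V))\<rceil>"
  have fin: "finite V" using assms(2) by (simp add: graph_def)
  then have "card V \<le> 2 ^ k"
    unfolding k_def using assms(4) by (intro le_two_power_ceiling_log) (simp add: Suc_le_eq card_gt_0_iff)
  then obtain Ss where "length Ss = k" and Ss: "\<forall>S\<in>set Ss. S \<subseteq> V \<and> hamiltonian_on E S"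
    and "\<forall>x\<in>V. card {w\<in>V. map (\<lambda>S. w \<in> S) Ss = map (\<lambda>S. x \<in> S) Ss} \<le> 1"
    using exists_hamiltonian_refinement[OF assms(2,4,6-10), of k k] by auto
  then have "separating V (set Ss)" and "card (set Ss) \<le> k"
    using fin separating_if_classes_trivial card_length[of Ss] by auto
  then show ?thesis
    unfolding k_def using sh_eqI[OF fin assms(4) _ Ss] by simp
qed

end
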